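(* Let $\Gamma$ be the bipartite graph with vertex set $\{L_1,\dots,L_{12}\}\sqcup\{M_1,\dots,M_{12}\}$, where no two $L$'s and no two $M$'s are adjacent, and $L_i$ is adjacent to $M_j$ if and only if $j\in N(i)$, with $N(1)=\{1,2,6,8,9,12\}$, $N(2)=\{1,2,5,7,10,11\}$, $N(3)=\{3,4,6,8,10,11\}$, $N(4)=\{3,4,5,7,9,12\}$, $N(5)=\{2,4,5,6,10,12\}$, $N(6)=\{1,3,5,6,9,11\}$, $N(7)=\{2,4,7,8,9,11\}$, $N(8)=\{1,3,7,8,10,12\}$, $N(9)=\{1,4,6,7,9,10\}$, $N(10)=\{2,3,5,8,9,10\}$, $N(11)=\{2,3,6,7,11,12\}$, $N(12)=\{1,4,5,8,11,12\}$. Let $\mathbb{Z}\Gamma$ be the free abelian group on the $24$ vertices with the symmetric bilinear form whose Gram matrix is $A-2\mathbb{I}_{24}$ ($A$ the adjacency matrix of $\Gamma$), and let $S=\mathbb{Z}\Gamma/\operatorname{rad}(\mathbb{Z}\Gamma)$, where $\operatorname{rad}(\mathbb{Z}\Gamma)$ is the kernel of the form. Then $S$ has rank $15$ and is freely generated by the images of $L_2, L_3, L_4, L_5, L_6, L_7, L_8, L_{11}, M_1, M_2, M_3, M_6, M_8, M_9, M_{12}$. Moreover, the discriminant group $S^\vee/S$ is isomorphic to $(\mathbb{Z}/2\mathbb{Z})^{\oplus 4}\oplus\mathbb{Z}/16\mathbb{Z}$.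
   Context: The radical of a lattice $L$ is $L^\perp=\{v\in L: v\cdot w=0\ \forall w\in L\}$; $S$ is a nondegenerate lattice and $S^\vee=\operatorname{Hom}(S,\mathbb{Z})$ is its dual. *)

theory Defs
  imports "HOL-Algebra.Elementary_Groups" "HOL-Algebra.Coset"
begin

datatype vtx = L nat | M nat

definition Vs :: "vtx set" where
  "Vs = L ` {1..12} \<union> M ` {1..12}"

definition Nb :: "nat \<Rightarrow> nat set" where
  "Nb i = (if i = 1 then {1,2,6,8,9,12}
      else if i = 2 then {1,2,5,7,10,11}
      else if i = 3 then {3,4,6,8,10,11}
      else if i = 4 then {3,4,5,7,9,12}
      else if i = 5 then {2,4,5,6,10,12}
      else if i = 6 then {1,3,5,6,9,11}
      else if i = 7 then {2,4,7,8,9,11}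
      else if i = 8 then {1,3,7,8,10,12}
      else if i = 9 then {1,4,6,7,9,10}
      else if i = 10 then {2,3,5,8,9,10}
      else if i = 11 then {2,3,6,7,11,12}
      else if i = 12 then {1,4,5,8,11,12}
      else {})"

fun adj :: "vtx \<Rightarrow> vtx \<Rightarrow> bool" where
  "adj (L i) (M j) = (j \<in> Nb i)"
| "adj (M j) (L i) = (j \<in> Nb i)"
| "adj _ _ = False"

definition gram :: "vtx \<Rightarrow> vtx \<Rightarrow> int" where
  "gram u v = (if adj u v then 1 else 0) - (if u = v then 2 else 0)"

definition ZGamma :: "(vtx \<Rightarrow> int) set" where
  "ZGamma = {x. \<forall>v. v \<notin> Vs \<longrightarrow> x v = 0}"

definition form :: "(vtx \<Rightarrow> int) \<Rightarrow> (vtx \<Rightarrow> int) \<Rightarrow> int" where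
  "form x y = (\<Sum>u\<in>Vs. \<Sum>v\<in>Vs. x u * gram u v * y v)"

definition rad :: "(vtx \<Rightarrow> int) set" where
  "rad = {x \<in> ZGamma. \<forall>y \<in> ZGamma. form x y = 0}"

definition e :: "vtx \<Rightarrow> (vtx \<Rightarrow> int)" where
  "e v = (\<lambda>u. if u = v then 1 else 0)"

definition comb :: "vtx set \<Rightarrow> (vtx \<Rightarrow> int) \<Rightarrow> (vtx \<Rightarrow> int)" where
  "comb B c = (\<lambda>u. \<Sum>v\<in>B. c v * e v u)"

definition Bgens :: "vtx set" where
  "Bgens = {L 2, L 3, L 4, L 5, L 6, L 7, L 8, L 11, M 1, M 2, M 3, M 6, M 8, M 9, M 12}"

definition freely_generates_S :: "vtx set \<Rightarrow> bool" where
  "freely_generates_S B \<longleftrightarrow>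
     (\<forall>x \<in> ZGamma. \<exists>c. (\<lambda>v. x v - comb B c v) \<in> rad) \<and>
     (\<forall>c. comb B c \<in> rad \<longrightarrow> (\<forall>v\<in>B. c v = 0))"

text \<open>Dual S^vee = Hom(S, Z), realized as additive maps Z Gamma -> Z vanishing on the radical
  (extended by 0 outside Z Gamma).\<close>
definition Sdual :: "((vtx \<Rightarrow> int) \<Rightarrow> int) set" where
  "Sdual = {f. (\<forall>x\<in>ZGamma. \<forall>y\<in>ZGamma. f (\<lambda>v. x v + y v) = f x + f y)
             \<and> (\<forall>r\<in>rad. f r = 0) \<and> (\<forall>x. x \<notin> ZGamma \<longrightarrow> f x = 0)}"

definition S_in_dual :: "((vtx \<Rightarrow> int) \<Rightarrow> int) set" where
  "S_in_dual = {f. \<exists>x\<in>ZGamma. f = (\<lambda>y. if y \<in> ZGamma then form x y else 0)}"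

definition dual_group :: "((vtx \<Rightarrow> int) \<Rightarrow> int) monoid" where
  "dual_group = \<lparr>carrier = Sdual, mult = (\<lambda>f g z. f z + g z), one = (\<lambda>z. 0)\<rparr>"

end

theory Submission
  imports Defs
begin

text \<open>
  Write \<open>G\<close> for the Gram matrix and \<open>B\<close> for the fifteen given vertices. Each of the nine
  vertices \<open>v \<notin> B\<close> carries a radical vector equal to \<open>1\<close> at \<open>v\<close> and supported on
  \<open>B \<union> {v}\<close>; hence \<open>B\<close> spans \<open>S\<close>. The block \<open>G\<^sub>B\<close> is invertible with \<open>16 G\<^sub>B\<^sup>-\<^sup>1\<close>
  integral, so \<open>B\<close> is independent modulo the radical and the nine vectors span the radical.
  A functional therefore lies in \<open>S\<^sup>\<or>\<close> iff it kills these nine vectors, and it is determined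
  by its values on \<open>B\<close>.

  Four vertex sets meeting every neighbourhood evenly, and a vector \<open>\<mu>\<close> with
  \<open>G \<mu> \<equiv> 0 (mod 16)\<close>, pair with \<open>S\<^sup>\<or>\<close> to give a homomorphism onto
  \<open>(\<int>/2)\<^sup>4 \<oplus> \<int>/16\<close> that vanishes on \<open>S\<close>. It is onto by an explicit lift, and its kernel
  is exactly \<open>S\<close> because an explicit integral preimage under \<open>G\<^sub>B\<close> exists whenever the
  pairings vanish.
\<close>

declare One_nat_def [simp del] \<comment> \<open>keeps \<open>L 1\<close>, \<open>M 1\<close> from becoming \<open>L (Suc 0)\<close>, \<open>M (Suc 0)\<close>,
  which the explicit Gram rows below would no longer match\<close>

section \<open>Vectors on the vertices and the Gram form\<close>

definition vdot :: "(vtx \<Rightarrow> int) \<Rightarrow> (vtx \<Rightarrow> int) \<Rightarrow> int" where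
  "vdot x y = (\<Sum>v\<in>Vs. x v * y v)"

definition gram_vec :: "(vtx \<Rightarrow> int) \<Rightarrow> vtx \<Rightarrow> int" where
  "gram_vec x w = (\<Sum>u\<in>Vs. x u * gram u w)"

definition vec_of :: "(vtx \<times> int) list \<Rightarrow> vtx \<Rightarrow> int" where
  "vec_of ps v = (\<Sum>(w, k)\<leftarrow>ps. if v = w then k else 0)"

lemma finite_Vs [simp]: "finite Vs"
  by (simp add: Vs_def)

lemma Vs_explicit: "Vs = {L 1, L 2, L 3, L 4, L 5, L 6, L 7, L 8, L 9, L 10, L 11, L 12,
  M 1, M 2, M 3, M 4, M 5, M 6, M 7, M 8, M 9, M 10, M 11, M 12}"
proof -
  have "{1..12::nat} = {1, 2, 3, 4, 5, 6, 7, 8, 9, 10, 11, 12}"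
    by (auto; presburger)
  then show ?thesis
    unfolding Vs_def by auto
qed

lemma Bgens_subset_Vs: "Bgens \<subseteq> Vs"
  by (simp add: Bgens_def Vs_explicit)

lemma finite_Bgens [simp]: "finite Bgens"
  by (simp add: Bgens_def)

lemma card_Bgens: "card Bgens = 15"
  by (simp add: Bgens_def)

lemma Vs_minus_Bgens: "Vs - Bgens = {L 1, L 9, L 10, L 12, M 4, M 5, M 7, M 10, M 11}"
  by (auto simp: Vs_explicit Bgens_def)

lemma gram_sym: "gram u v = gram v u"
  by (cases u; cases v) (auto simp: gram_def)

lemma vdot_commute: "vdot x y = vdot y x"
  by (simp add: vdot_def mult.commute)

lemma vdot_gram_vec_commute: "vdot (gram_vec x) y = vdot x (gram_vec y)"
  unfolding vdot_def gram_vec_def sum_distrib_left sum_distrib_right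
  by (subst sum.swap) (simp add: gram_sym mult_ac)

lemma form_eq_vdot: "form x y = vdot (gram_vec x) y"
  unfolding form_def vdot_def gram_vec_def sum_distrib_right
  by (subst sum.swap) simp

lemma e_in_ZGamma [simp]: "v \<in> Vs \<Longrightarrow> e v \<in> ZGamma"
  by (auto simp: ZGamma_def e_def)

lemma vdot_e: "v \<in> Vs \<Longrightarrow> vdot a (e v) = a v"
  by (simp add: vdot_def e_def if_distrib cong: if_cong)

lemma comb_eq: "finite B \<Longrightarrow> comb B c u = (if u \<in> B then c u else 0)"
  by (simp add: comb_def e_def if_distrib cong: if_cong)

lemma ZGamma_add: "x \<in> ZGamma \<Longrightarrow> y \<in> ZGamma \<Longrightarrow> (\<lambda>v. x v + y v) \<in> ZGamma"
  by (simp add: ZGamma_def)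

lemma ZGamma_scale: "x \<in> ZGamma \<Longrightarrow> (\<lambda>v. k * x v) \<in> ZGamma"
  by (simp add: ZGamma_def)

lemma comb_in_ZGamma: "B \<subseteq> Vs \<Longrightarrow> comb B c \<in> ZGamma"
  by (auto simp: ZGamma_def comb_def e_def intro!: sum.neutral)

lemma gram_vec_sum:
  "finite I \<Longrightarrow> gram_vec (\<lambda>u. \<Sum>i\<in>I. k i * r i u) w = (\<Sum>i\<in>I. k i * gram_vec (r i) w)"
  unfolding gram_vec_def sum_distrib_left sum_distrib_right
  by (subst sum.swap) (simp add: mult_ac)

lemma gram_vec_rows:
  "gram_vec x (L 1) = x (M 1) + x (M 2) + x (M 6) + x (M 8) + x (M 9) + x (M 12) - 2 * x (L 1)"
  "gram_vec x (L 2) = x (M 1) + x (M 2) + x (M 5) + x (M 7) + x (M 10) + x (M 11) - 2 * x (L 2)"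
  "gram_vec x (L 3) = x (M 3) + x (M 4) + x (M 6) + x (M 8) + x (M 10) + x (M 11) - 2 * x (L 3)"
  "gram_vec x (L 4) = x (M 3) + x (M 4) + x (M 5) + x (M 7) + x (M 9) + x (M 12) - 2 * x (L 4)"
  "gram_vec x (L 5) = x (M 2) + x (M 4) + x (M 5) + x (M 6) + x (M 10) + x (M 12) - 2 * x (L 5)"
  "gram_vec x (L 6) = x (M 1) + x (M 3) + x (M 5) + x (M 6) + x (M 9) + x (M 11) - 2 * x (L 6)"
  "gram_vec x (L 7) = x (M 2) + x (M 4) + x (M 7) + x (M 8) + x (M 9) + x (M 11) - 2 * x (L 7)"
  "gram_vec x (L 8) = x (M 1) + x (M 3) + x (M 7) + x (M 8) + x (M 10) + x (M 12) - 2 * x (L 8)"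
  "gram_vec x (L 9) = x (M 1) + x (M 4) + x (M 6) + x (M 7) + x (M 9) + x (M 10) - 2 * x (L 9)"
  "gram_vec x (L 10) = x (M 2) + x (M 3) + x (M 5) + x (M 8) + x (M 9) + x (M 10) - 2 * x (L 10)"
  "gram_vec x (L 11) = x (M 2) + x (M 3) + x (M 6) + x (M 7) + x (M 11) + x (M 12) - 2 * x (L 11)"
  "gram_vec x (L 12) = x (M 1) + x (M 4) + x (M 5) + x (M 8) + x (M 11) + x (M 12) - 2 * x (L 12)"
  "gram_vec x (M 1) = x (L 1) + x (L 2) + x (L 6) + x (L 8) + x (L 9) + x (L 12) - 2 * x (M 1)"
  "gram_vec x (M 2) = x (L 1) + x (L 2) + x (L 5) + x (L 7) + x (L 10) + x (L 11) - 2 * x (M 2)"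
  "gram_vec x (M 3) = x (L 3) + x (L 4) + x (L 6) + x (L 8) + x (L 10) + x (L 11) - 2 * x (M 3)"
  "gram_vec x (M 4) = x (L 3) + x (L 4) + x (L 5) + x (L 7) + x (L 9) + x (L 12) - 2 * x (M 4)"
  "gram_vec x (M 5) = x (L 2) + x (L 4) + x (L 5) + x (L 6) + x (L 10) + x (L 12) - 2 * x (M 5)"
  "gram_vec x (M 6) = x (L 1) + x (L 3) + x (L 5) + x (L 6) + x (L 9) + x (L 11) - 2 * x (M 6)"
  "gram_vec x (M 7) = x (L 2) + x (L 4) + x (L 7) + x (L 8) + x (L 9) + x (L 11) - 2 * x (M 7)"
  "gram_vec x (M 8) = x (L 1) + x (L 3) + x (L 7) + x (L 8) + x (L 10) + x (L 12) - 2 * x (M 8)"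
  "gram_vec x (M 9) = x (L 1) + x (L 4) + x (L 6) + x (L 7) + x (L 9) + x (L 10) - 2 * x (M 9)"
  "gram_vec x (M 10) = x (L 2) + x (L 3) + x (L 5) + x (L 8) + x (L 9) + x (L 10) - 2 * x (M 10)"
  "gram_vec x (M 11) = x (L 2) + x (L 3) + x (L 6) + x (L 7) + x (L 11) + x (L 12) - 2 * x (M 11)"
  "gram_vec x (M 12) = x (L 1) + x (L 4) + x (L 5) + x (L 8) + x (L 11) + x (L 12) - 2 * x (M 12)"
  by (simp_all add: gram_vec_def Vs_explicit gram_def Nb_def)

definition additive_on_ZGamma :: "((vtx \<Rightarrow> int) \<Rightarrow> int) \<Rightarrow> bool" where
  "additive_on_ZGamma f \<longleftrightarrow> (\<forall>x\<in>ZGamma. \<forall>y\<in>ZGamma. f (\<lambda>v. x v + y v) = f x + f y)"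

lemma additive_on_ZGammaD:
  "additive_on_ZGamma f \<Longrightarrow> x \<in> ZGamma \<Longrightarrow> y \<in> ZGamma \<Longrightarrow> f (\<lambda>v. x v + y v) = f x + f y"
  by (simp add: additive_on_ZGamma_def)

lemma additive_zero:
  assumes "additive_on_ZGamma f"
  shows "f (\<lambda>v. 0) = 0"
proof -
  have zero: "(\<lambda>v. 0) \<in> ZGamma"
    by (simp add: ZGamma_def)
  show ?thesis
    using additive_on_ZGammaD[OF assms zero zero] by simp
qed

lemma additive_scale:
  assumes add: "additive_on_ZGamma f" and z: "z \<in> ZGamma"
  shows "f (\<lambda>v. k * z v) = k * f z"
proof (induction k rule: int_induct[where k = 0])
  case base
  show ?case
    using additive_zero[OF add] by simp
next
  case (step1 i)
  have "f (\<lambda>v. (i + 1) * z v) = f (\<lambda>v. i * z v + z v)"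
    by (simp add: algebra_simps)
  also have "\<dots> = f (\<lambda>v. i * z v) + f z"
    by (rule additive_on_ZGammaD[OF add ZGamma_scale[OF z] z])
  finally show ?case
    using step1 by (simp add: algebra_simps)
next
  case (step2 i)
  have "f (\<lambda>v. i * z v) = f (\<lambda>v. (i - 1) * z v + z v)"
    by (simp add: algebra_simps)
  also have "\<dots> = f (\<lambda>v. (i - 1) * z v) + f z"
    by (rule additive_on_ZGammaD[OF add ZGamma_scale[OF z] z])
  finally show ?case
    using step2 by (simp add: algebra_simps)
qed

lemma additive_eq_vdot:
  assumes add: "additive_on_ZGamma f" and y: "y \<in> ZGamma"
  shows "f y = vdot y (\<lambda>v. f (e v))"
proof -
  have comb_rule: "f (comb B y) = (\<Sum>v\<in>B. y v * f (e v))" if "B \<subseteq> Vs" for B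
    using finite_subset[OF that finite_Vs] that
  proof (induction B rule: finite_induct)
    case empty
    show ?case
      using additive_zero[OF add] by (simp add: comb_def)
  next
    case (insert b B)
    have "f (comb (insert b B) y) = f (\<lambda>u. y b * e b u + comb B y u)"
      using insert.hyps by (simp add: comb_def)
    also have "\<dots> = f (\<lambda>u. y b * e b u) + f (comb B y)"
      using insert.prems by (intro additive_on_ZGammaD[OF add] ZGamma_scale comb_in_ZGamma) auto
    finally show ?case
      using insert additive_scale[OF add] by simp
  qed
  have "comb Vs y = y"
    using y by (auto simp: comb_eq ZGamma_def)
  then show ?thesis
    using comb_rule[OF order_refl] by (simp add: vdot_def)
qed

section \<open>The radical\<close>

lemma rad_iff: "x \<in> rad \<longleftrightarrow> x \<in> ZGamma \<and> (\<forall>w\<in>Vs. gram_vec x w = 0)"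
proof
  assume "x \<in> rad"
  then have "x \<in> ZGamma" and "\<And>w. w \<in> Vs \<Longrightarrow> vdot (gram_vec x) (e w) = 0"
    by (auto simp: rad_def form_eq_vdot)
  then show "x \<in> ZGamma \<and> (\<forall>w\<in>Vs. gram_vec x w = 0)"
    by (simp add: vdot_e)
next
  assume "x \<in> ZGamma \<and> (\<forall>w\<in>Vs. gram_vec x w = 0)"
  then show "x \<in> rad"
    by (simp add: rad_def form_eq_vdot vdot_def)
qed

lemma rad_sum:
  assumes "finite I" and "\<And>i. i \<in> I \<Longrightarrow> r i \<in> rad"
  shows "(\<lambda>u. \<Sum>i\<in>I. k i * r i u) \<in> rad"
  using assms by (auto simp: rad_iff gram_vec_sum ZGamma_def)

lemma rad_diff: "x \<in> rad \<Longrightarrow> y \<in> rad \<Longrightarrow> (\<lambda>u. x u - y u) \<in> rad"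
  by (auto simp: rad_iff ZGamma_def gram_vec_def sum_subtractf left_diff_distrib)

lemma outside_eq_sum_complement:
  assumes r: "\<And>v w. v \<in> Vs - B \<Longrightarrow> w \<notin> insert v B \<Longrightarrow> r v w = 0"
    and r_self: "\<And>v. v \<in> Vs - B \<Longrightarrow> r v v = 1"
    and x: "x \<in> ZGamma" and u: "u \<notin> B"
  shows "x u = (\<Sum>v\<in>Vs - B. x v * r v u)"
proof (cases "u \<in> Vs")
  case True
  have "(\<Sum>v\<in>Vs - B. x v * r v u) = x u * r u u + (\<Sum>v\<in>Vs - B - {u}. x v * r v u)"
    using True u by (intro sum.remove) auto
  moreover have "(\<Sum>v\<in>Vs - B - {u}. x v * r v u) = 0"
    using u by (intro sum.neutral ballI) (auto intro: r)
  ultimately show ?thesis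
    using True u r_self by simp
next
  case False
  then have "(\<Sum>v\<in>Vs - B. x v * r v u) = 0"
    using u by (intro sum.neutral ballI) (auto intro: r)
  then show ?thesis
    using False x by (simp add: ZGamma_def)
qed

lemma diff_comb_in_rad:
  assumes "finite B"
    and r_rad: "\<And>v. v \<in> Vs - B \<Longrightarrow> r v \<in> rad"
    and r: "\<And>v w. v \<in> Vs - B \<Longrightarrow> w \<notin> insert v B \<Longrightarrow> r v w = 0"
    and r_self: "\<And>v. v \<in> Vs - B \<Longrightarrow> r v v = 1"
    and x: "x \<in> ZGamma"
  shows "(\<lambda>u. x u - comb B (\<lambda>w. x w - (\<Sum>v\<in>Vs - B. x v * r v w)) u) \<in> rad"
proof -
  have "(\<lambda>u. x u - comb B (\<lambda>w. x w - (\<Sum>v\<in>Vs - B. x v * r v w)) u)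
        = (\<lambda>u. \<Sum>v\<in>Vs - B. x v * r v u)"
    using outside_eq_sum_complement[where B = B and r = r and x = x, OF r r_self x] \<open>finite B\<close>
    by (auto simp: comb_eq)
  then show ?thesis
    using rad_sum[of "Vs - B" r x] r_rad by simp
qed

definition rad_vec :: "vtx \<Rightarrow> vtx \<Rightarrow> int" where
  "rad_vec v = vec_of ((v, 1) #
     (if v = L 1 then [(L 2, 1), (L 3, -1), (L 4, -1), (L 5, 1), (L 6, -1), (L 7, 1), (L 8, -1), (M 2, 2), (M 3, -2)]
     else if v = L 9 then [(L 5, -1), (L 6, 1), (L 11, -1), (M 1, 1), (M 2, -1), (M 9, 1), (M 12, -1)]
     else if v = L 10 then [(L 5, -1), (L 7, 1), (L 11, -1), (M 6, -1), (M 8, 1), (M 9, 1), (M 12, -1)]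
     else if v = L 12 then [(L 5, -1), (L 8, 1), (L 11, -1), (M 1, 1), (M 2, -1), (M 6, -1), (M 8, 1)]
     else if v = M 4 then [(L 5, 1), (L 6, -1), (L 7, 1), (L 8, -1), (M 1, -1), (M 2, 1), (M 3, -1)]
     else if v = M 5 then [(L 2, 1), (L 3, -1), (L 5, 1), (L 8, -1), (M 2, 1), (M 3, -1), (M 8, -1)]
     else if v = M 7 then [(L 2, 1), (L 3, -1), (L 6, -1), (L 7, 1), (M 2, 1), (M 3, -1), (M 6, -1)]
     else if v = M 10 then [(L 2, 1), (L 4, -1), (L 5, 1), (L 6, -1), (M 2, 1), (M 3, -1), (M 9, -1)]
     else if v = M 11 then [(L 2, 1), (L 4, -1), (L 7, 1), (L 8, -1), (M 2, 1), (M 3, -1), (M 12, -1)]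
     else []))"

lemma rad_vec_self: "v \<in> Vs - Bgens \<Longrightarrow> rad_vec v v = 1"
  unfolding Vs_minus_Bgens by (elim insertE emptyE; simp add: rad_vec_def vec_of_def)

lemma rad_vec_outside: "v \<in> Vs - Bgens \<Longrightarrow> w \<notin> insert v Bgens \<Longrightarrow> rad_vec v w = 0"
  unfolding Vs_minus_Bgens by (elim insertE emptyE; simp add: rad_vec_def vec_of_def Bgens_def)

lemma rad_vec_in_rad:
  assumes v: "v \<in> Vs - Bgens"
  shows "rad_vec v \<in> rad"
proof -
  have "rad_vec v \<in> ZGamma"
    using v Bgens_subset_Vs by (auto simp: ZGamma_def intro!: rad_vec_outside)
  moreover have "\<forall>w\<in>Vs. gram_vec (rad_vec v) w = 0"
    using v unfolding Vs_minus_Bgens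
    by (elim insertE emptyE; simp add: Vs_explicit rad_vec_def vec_of_def gram_vec_rows)
  ultimately show ?thesis
    by (simp add: rad_iff)
qed

text \<open>The coefficient matrix is \<open>16 G\<^sub>B\<^sup>-\<^sup>1\<close>, for \<open>G\<^sub>B\<close> the Gram matrix on \<open>Bgens\<close>.\<close>

lemma gram_vec_comb_Bgens_inverse:
  fixes c :: "vtx \<Rightarrow> int"
  defines "g \<equiv> gram_vec (comb Bgens c)"
  shows
  "16 * c (L 2) = - 20 * g (L 2) + 8 * g (L 3) + 8 * g (L 4) - 10 * g (L 5) + 6 * g (L 6)
      - 6 * g (L 7) + 6 * g (L 8) - 4 * g (L 11) - 4 * g (M 1) - 20 * g (M 2) + 12 * g (M 3)
      + 4 * g (M 8) + 4 * g (M 9)"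
  "16 * c (L 3) = 8 * g (L 2) - 16 * g (L 3) + 12 * g (L 5) - 4 * g (L 6) + 4 * g (L 7)
      - 4 * g (L 8) + 8 * g (L 11) + 16 * g (M 2) - 8 * g (M 3) - 8 * g (M 8) + 8 * g (M 12)"
  "16 * c (L 4) = 8 * g (L 2) - 16 * g (L 4) + 12 * g (L 5) - 4 * g (L 6) + 4 * g (L 7)
      - 4 * g (L 8) + 8 * g (L 11) + 16 * g (M 2) - 8 * g (M 3) + 8 * g (M 6) - 8 * g (M 9)"
  "16 * c (L 5) = - 10 * g (L 2) + 12 * g (L 3) + 12 * g (L 4) - 37 * g (L 5) + 19 * g (L 6)
      - 3 * g (L 7) + 19 * g (L 8) - 18 * g (L 11) + 14 * g (M 1) - 34 * g (M 2) + 22 * g (M 3)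
      - 12 * g (M 6) + 14 * g (M 8) + 14 * g (M 9) - 12 * g (M 12)"
  "16 * c (L 6) = 6 * g (L 2) - 4 * g (L 3) - 4 * g (L 4) + 19 * g (L 5) - 21 * g (L 6)
      + 5 * g (L 7) - 5 * g (L 8) + 14 * g (L 11) - 10 * g (M 1) + 22 * g (M 2) - 10 * g (M 3)
      + 4 * g (M 6) - 2 * g (M 8) - 10 * g (M 9) + 12 * g (M 12)"
  "16 * c (L 7) = - 6 * g (L 2) + 4 * g (L 3) + 4 * g (L 4) - 3 * g (L 5) + 5 * g (L 6)
      - 21 * g (L 7) + 5 * g (L 8) + 2 * g (L 11) + 2 * g (M 1) - 14 * g (M 2) + 10 * g (M 3)
      + 4 * g (M 6) - 6 * g (M 8) - 6 * g (M 9) + 4 * g (M 12)"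
  "16 * c (L 8) = 6 * g (L 2) - 4 * g (L 3) - 4 * g (L 4) + 19 * g (L 5) - 5 * g (L 6) + 5 * g (L 7)
      - 21 * g (L 8) + 14 * g (L 11) - 10 * g (M 1) + 22 * g (M 2) - 10 * g (M 3) + 12 * g (M 6)
      - 10 * g (M 8) - 2 * g (M 9) + 4 * g (M 12)"
  "16 * c (L 11) = - 4 * g (L 2) + 8 * g (L 3) + 8 * g (L 4) - 18 * g (L 5) + 14 * g (L 6)
      + 2 * g (L 7) + 14 * g (L 8) - 20 * g (L 11) + 12 * g (M 1) - 20 * g (M 2) + 12 * g (M 3)
      - 8 * g (M 6) + 12 * g (M 8) + 12 * g (M 9) - 8 * g (M 12)"
  "16 * c (M 1) = - 4 * g (L 2) + 14 * g (L 5) - 10 * g (L 6) + 2 * g (L 7) - 10 * g (L 8)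
      + 12 * g (L 11) - 20 * g (M 1) + 12 * g (M 2) - 4 * g (M 3) + 8 * g (M 6) - 4 * g (M 8)
      - 4 * g (M 9) + 8 * g (M 12)"
  "16 * c (M 2) = - 20 * g (L 2) + 16 * g (L 3) + 16 * g (L 4) - 34 * g (L 5) + 22 * g (L 6)
      - 14 * g (L 7) + 22 * g (L 8) - 20 * g (L 11) + 12 * g (M 1) - 52 * g (M 2) + 28 * g (M 3)
      - 8 * g (M 6) + 12 * g (M 8) + 12 * g (M 9) - 8 * g (M 12)"
  "16 * c (M 3) = 12 * g (L 2) - 8 * g (L 3) - 8 * g (L 4) + 22 * g (L 5) - 10 * g (L 6)
      + 10 * g (L 7) - 10 * g (L 8) + 12 * g (L 11) - 4 * g (M 1) + 28 * g (M 2) - 20 * g (M 3)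
      + 8 * g (M 6) - 4 * g (M 8) - 4 * g (M 9) + 8 * g (M 12)"
  "16 * c (M 6) = 8 * g (L 4) - 12 * g (L 5) + 4 * g (L 6) + 4 * g (L 7) + 12 * g (L 8)
      - 8 * g (L 11) + 8 * g (M 1) - 8 * g (M 2) + 8 * g (M 3) - 16 * g (M 6) + 8 * g (M 8)
      + 8 * g (M 9)"
  "16 * c (M 8) = 4 * g (L 2) - 8 * g (L 3) + 14 * g (L 5) - 2 * g (L 6) - 6 * g (L 7)
      - 10 * g (L 8) + 12 * g (L 11) - 4 * g (M 1) + 12 * g (M 2) - 4 * g (M 3) + 8 * g (M 6)
      - 20 * g (M 8) - 4 * g (M 9) + 8 * g (M 12)"
  "16 * c (M 9) = 4 * g (L 2) - 8 * g (L 4) + 14 * g (L 5) - 10 * g (L 6) - 6 * g (L 7)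
      - 2 * g (L 8) + 12 * g (L 11) - 4 * g (M 1) + 12 * g (M 2) - 4 * g (M 3) + 8 * g (M 6)
      - 4 * g (M 8) - 20 * g (M 9) + 8 * g (M 12)"
  "16 * c (M 12) = 8 * g (L 3) - 12 * g (L 5) + 12 * g (L 6) + 4 * g (L 7) + 4 * g (L 8)
      - 8 * g (L 11) + 8 * g (M 1) - 8 * g (M 2) + 8 * g (M 3) + 8 * g (M 8) + 8 * g (M 9)
      - 16 * g (M 12)"
  unfolding g_def by (simp_all add: gram_vec_rows comb_eq Bgens_def algebra_simps)

lemma comb_Bgens_in_rad_eq_0:
  assumes "comb Bgens c \<in> rad" and "v \<in> Bgens"
  shows "c v = 0"
proof -
  have "\<forall>w\<in>Bgens. gram_vec (comb Bgens c) w = 0"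
    using assms(1) Bgens_subset_Vs by (auto simp: rad_iff)
  then show ?thesis
    using assms(2) gram_vec_comb_Bgens_inverse[of c] by (auto simp: Bgens_def)
qed

lemma freely_generates_S_Bgens: "freely_generates_S Bgens"
  unfolding freely_generates_S_def
  using diff_comb_in_rad[OF finite_Bgens rad_vec_in_rad rad_vec_outside rad_vec_self]
    comb_Bgens_in_rad_eq_0 by blast

lemma rad_eq_sum_rad_vec:
  assumes r: "r \<in> rad"
  shows "r u = (\<Sum>v\<in>Vs - Bgens. r v * rad_vec v u)"
proof -
  define d where "d = (\<lambda>u. r u - (\<Sum>v\<in>Vs - Bgens. r v * rad_vec v u))"
  have "d \<in> rad"
    unfolding d_def using r rad_sum[of "Vs - Bgens" rad_vec r] rad_vec_in_rad
    by (intro rad_diff) auto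
  moreover have "d = comb Bgens d"
    using outside_eq_sum_complement[where B = Bgens and r = rad_vec and x = r,
        OF rad_vec_outside rad_vec_self] r
    by (auto simp: d_def comb_eq rad_iff)
  ultimately have "d u = 0"
    using comb_Bgens_in_rad_eq_0[of d u] comb_eq[OF finite_Bgens, of d u]
    by (cases "u \<in> Bgens") auto
  then show ?thesis
    by (simp add: d_def)
qed

section \<open>The dual lattice\<close>

definition dual_elem :: "(vtx \<Rightarrow> int) \<Rightarrow> (vtx \<Rightarrow> int) \<Rightarrow> int" where
  "dual_elem a y = (if y \<in> ZGamma then vdot y a else 0)"

definition rad_orth :: "(vtx \<Rightarrow> int) \<Rightarrow> bool" where
  "rad_orth a \<longleftrightarrow> (\<forall>v\<in>Vs - Bgens. vdot (rad_vec v) a = 0)"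

lemma vdot_rad_vec:
  assumes v: "v \<in> Vs - Bgens"
  shows "vdot (rad_vec v) a = a v + (\<Sum>w\<in>Bgens. rad_vec v w * a w)"
proof -
  have "vdot (rad_vec v) a = (\<Sum>u\<in>insert v Bgens. rad_vec v u * a u)"
    unfolding vdot_def using v Bgens_subset_Vs
    by (intro sum.mono_neutral_right) (auto simp: rad_vec_outside)
  also have "\<dots> = a v + (\<Sum>w\<in>Bgens. rad_vec v w * a w)"
    using v rad_vec_self by simp
  finally show ?thesis .
qed

lemma rad_orth_iff: "rad_orth a \<longleftrightarrow> (\<forall>v\<in>Vs - Bgens. a v = - (\<Sum>w\<in>Bgens. rad_vec v w * a w))"
  unfolding rad_orth_def by (simp add: vdot_rad_vec eq_neg_iff_add_eq_0)

lemma rad_orth_eqI: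
  assumes "rad_orth a" "rad_orth b" "\<And>w. w \<in> Bgens \<Longrightarrow> a w = b w" "v \<in> Vs"
  shows "a v = b v"
proof (cases "v \<in> Bgens")
  case False
  then have "a v = - (\<Sum>w\<in>Bgens. rad_vec v w * a w)" and "b v = - (\<Sum>w\<in>Bgens. rad_vec v w * b w)"
    using assms by (simp_all add: rad_orth_iff)
  then show ?thesis
    using assms(3) by simp
qed (use assms(3) in simp)

lemma vdot_rad_eq_0:
  assumes "rad_orth a" and r: "r \<in> rad"
  shows "vdot r a = 0"
proof -
  have "vdot r a = (\<Sum>u\<in>Vs. (\<Sum>v\<in>Vs - Bgens. r v * rad_vec v u) * a u)"
    unfolding vdot_def
    by (rule sum.cong[OF refl]) (subst rad_eq_sum_rad_vec[OF r], rule refl)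
  also have "\<dots> = (\<Sum>v\<in>Vs - Bgens. r v * vdot (rad_vec v) a)"
    unfolding vdot_def sum_distrib_left sum_distrib_right
    by (subst sum.swap) (simp add: mult_ac)
  also have "\<dots> = 0"
    using assms(1) by (simp add: rad_orth_def)
  finally show ?thesis .
qed

lemma dual_elem_in_Sdual:
  assumes "rad_orth a"
  shows "dual_elem a \<in> Sdual"
proof -
  have "dual_elem a (\<lambda>v. x v + y v) = dual_elem a x + dual_elem a y"
    if "x \<in> ZGamma" "y \<in> ZGamma" for x y
    using that by (simp add: dual_elem_def ZGamma_add vdot_def distrib_right sum.distrib)
  moreover have "dual_elem a r = 0" if "r \<in> rad" for r
    using that vdot_rad_eq_0[OF assms] by (simp add: dual_elem_def)
  ultimately show ?thesis
    by (simp add: Sdual_def dual_elem_def)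
qed

lemma additive_on_ZGamma_Sdual: "f \<in> Sdual \<Longrightarrow> additive_on_ZGamma f"
  by (simp add: Sdual_def additive_on_ZGamma_def)

lemma Sdual_eq_dual_elem:
  assumes f: "f \<in> Sdual"
  shows "f = dual_elem (\<lambda>v. f (e v))"
proof
  fix y
  show "f y = dual_elem (\<lambda>v. f (e v)) y"
    using f additive_eq_vdot[OF additive_on_ZGamma_Sdual[OF f], of y]
    by (simp add: dual_elem_def Sdual_def)
qed

lemma rad_orth_Sdual:
  assumes f: "f \<in> Sdual"
  shows "rad_orth (\<lambda>v. f (e v))"
  unfolding rad_orth_def
proof
  fix v
  assume v: "v \<in> Vs - Bgens"
  then have "rad_vec v \<in> rad"
    by (rule rad_vec_in_rad)
  then have "f (rad_vec v) = 0" and "rad_vec v \<in> ZGamma"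
    using f by (auto simp: Sdual_def rad_iff)
  then show "vdot (rad_vec v) (\<lambda>v. f (e v)) = 0"
    using additive_eq_vdot[OF additive_on_ZGamma_Sdual[OF f]] by simp
qed

lemma dual_elem_cong: "(\<And>v. v \<in> Vs \<Longrightarrow> a v = b v) \<Longrightarrow> dual_elem a = dual_elem b"
  by (auto simp: dual_elem_def vdot_def intro!: ext sum.cong)

lemma dual_elem_e: "v \<in> Vs \<Longrightarrow> dual_elem a (e v) = a v"
  by (simp add: dual_elem_def vdot_commute vdot_e)

lemma rad_orth_gram_vec: "rad_orth (gram_vec x)"
proof -
  have "vdot (rad_vec v) (gram_vec x) = vdot x (gram_vec (rad_vec v))" for v
    by (subst vdot_commute) (rule vdot_gram_vec_commute)
  then show ?thesis
    using rad_vec_in_rad by (simp add: rad_orth_def rad_iff vdot_def)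
qed

lemma dual_elem_gram_vec: "dual_elem (gram_vec x) = (\<lambda>y. if y \<in> ZGamma then form x y else 0)"
  by (simp add: fun_eq_iff dual_elem_def form_eq_vdot vdot_commute[of "gram_vec x"])

lemma S_in_dual_eq: "S_in_dual = (\<lambda>x. dual_elem (gram_vec x)) ` ZGamma"
  by (auto simp: S_in_dual_def dual_elem_gram_vec)

definition extend :: "(vtx \<Rightarrow> int) \<Rightarrow> vtx \<Rightarrow> int" where
  "extend c v = (if v \<in> Vs - Bgens then - (\<Sum>w\<in>Bgens. rad_vec v w * c w) else c v)"

lemma extend_Bgens: "w \<in> Bgens \<Longrightarrow> extend c w = c w"
  by (simp add: extend_def)

lemma rad_orth_extend: "rad_orth (extend c)"
  by (simp add: rad_orth_iff extend_def)

section \<open>The discriminant group\<close>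

abbreviation disc_target :: "(int \<times> int \<times> int \<times> int \<times> int) monoid" where
  "disc_target \<equiv> integer_mod_group 2 \<times>\<times> integer_mod_group 2 \<times>\<times> integer_mod_group 2 \<times>\<times>
                   integer_mod_group 2 \<times>\<times> integer_mod_group 16"

definition mu16 :: "vtx \<Rightarrow> int" where
  "mu16 = vec_of
     [(L 2, -2), (L 3, -4), (L 4, -4), (L 5, 7), (L 6, -1), (L 7, 1), (L 8, -1), (L 11, 6),
      (M 1, -2), (M 2, -2), (M 3, -2), (M 6, -4), (M 8, -2), (M 9, 6), (M 12, 4)]"

lemma vdot_mu16:
  "vdot mu16 a = - 2 * a (L 2) - 4 * a (L 3) - 4 * a (L 4) + 7 * a (L 5) - a (L 6) + a (L 7)
      - a (L 8) + 6 * a (L 11)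
    - 2 * a (M 1) - 2 * a (M 2) - 2 * a (M 3) - 4 * a (M 6) - 2 * a (M 8) + 6 * a (M 9)
        + 4 * a (M 12)"
  by (simp add: vdot_def Vs_explicit mu16_def vec_of_def)

definition indicator_vec :: "vtx list \<Rightarrow> vtx \<Rightarrow> int" where
  "indicator_vec vs = vec_of (map (\<lambda>v. (v, 1)) vs)"

text \<open>
  Each of the four vertex lists meets every neighbourhood in an even number of vertices, and
  \<open>G mu16 \<equiv> 0 (mod 16)\<close>; so these pairings, reduced mod 2 resp. 16, vanish on \<open>S\<close>.
\<close>

definition disc_class :: "(vtx \<Rightarrow> int) \<Rightarrow> int \<times> int \<times> int \<times> int \<times> int" where
  "disc_class a =
     (vdot (indicator_vec [L 2, L 4, L 5, L 6]) a mod 2, vdot (indicator_vec [L 3, L 4, L 5, L 7]) a mod 2,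
      vdot (indicator_vec [M 1, M 2, M 6, M 8]) a mod 2, vdot (indicator_vec [M 6, M 8, M 9, M 12]) a mod 2,
      vdot mu16 a mod 16)"

lemma disc_class_eq:
  "disc_class a =
     ((a (L 2) + a (L 4) + a (L 5) + a (L 6)) mod 2, (a (L 3) + a (L 4) + a (L 5) + a (L 7)) mod 2,
      (a (M 1) + a (M 2) + a (M 6) + a (M 8)) mod 2, (a (M 6) + a (M 8) + a (M 9) + a (M 12)) mod 2,
      vdot mu16 a mod 16)"
  by (simp add: disc_class_def vdot_def Vs_explicit indicator_vec_def vec_of_def add.assoc)

lemma disc_class_cong: "(\<And>w. w \<in> Bgens \<Longrightarrow> a w = b w) \<Longrightarrow> disc_class a = disc_class b"
  by (simp add: disc_class_eq vdot_mu16 Bgens_def)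

lemma dvd_vdot_gram_vec:
  assumes "\<And>u. u \<in> Vs \<Longrightarrow> n dvd gram_vec l u"
  shows "n dvd vdot l (gram_vec x)"
proof -
  have "vdot l (gram_vec x) = vdot x (gram_vec l)"
    by (subst vdot_commute) (rule vdot_gram_vec_commute)
  then show ?thesis
    using assms by (simp add: vdot_def dvd_sum)
qed

lemma disc_class_gram_vec: "disc_class (gram_vec x) = (0, 0, 0, 0, 0)"
proof -
  have "2 dvd vdot (indicator_vec vs) (gram_vec x)"
    if "vs \<in> {[L 2, L 4, L 5, L 6], [L 3, L 4, L 5, L 7], [M 1, M 2, M 6, M 8], [M 6, M 8, M 9, M 12]}"
    for vs
    using that
    by (elim insertE emptyE; intro dvd_vdot_gram_vec)
      (auto simp: Vs_explicit gram_vec_rows indicator_vec_def vec_of_def)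
  moreover have "16 dvd vdot mu16 (gram_vec x)"
    by (rule dvd_vdot_gram_vec) (auto simp: Vs_explicit gram_vec_rows mu16_def vec_of_def)
  ultimately show ?thesis
    by (simp add: disc_class_def dvd_eq_mod_eq_0)
qed

text \<open>\<open>L 8\<close> lies in none of the four lists; its entry corrects the pairing with \<open>mu16\<close>.\<close>

definition disc_lift :: "int \<times> int \<times> int \<times> int \<times> int \<Rightarrow> vtx \<Rightarrow> int" where
  "disc_lift t = (case t of (t1, t2, t3, t4, t5) \<Rightarrow>
     extend (vec_of [(L 2, t1), (L 3, t2), (M 1, t3), (M 12, t4),
                     (L 8, - 2 * t1 - 4 * t2 - 2 * t3 + 4 * t4 - t5)]))"

lemma disc_class_disc_lift:
  assumes "t \<in> carrier disc_target"
  shows "disc_class (disc_lift t) = t"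
proof -
  obtain t1 t2 t3 t4 t5 where t: "t = (t1, t2, t3, t4, t5)"
    by (cases t) auto
  have "disc_class (disc_lift t) =
      disc_class (vec_of [(L 2, t1), (L 3, t2), (M 1, t3), (M 12, t4),
                          (L 8, - 2 * t1 - 4 * t2 - 2 * t3 + 4 * t4 - t5)])"
    unfolding disc_lift_def t by (auto intro: disc_class_cong extend_Bgens)
  also have "\<dots> = (t1 mod 2, t2 mod 2, t3 mod 2, t4 mod 2, t5 mod 16)"
    by (simp add: disc_class_eq vdot_mu16 vec_of_def)
  also have "\<dots> = t"
    using assms by (simp add: t carrier_integer_mod_group)
  finally show ?thesis .
qed

text \<open>
  \<open>gram_preimage a k1 k2 k3 k4 k5\<close> is \<open>G\<^sub>B\<^sup>-\<^sup>1 a\<close>, after eliminating \<open>a (L 2)\<close>, \<open>a (L 3)\<close>,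
  \<open>a (M 1)\<close>, \<open>a (M 12)\<close>, \<open>a (L 8)\<close> through the hypotheses of \<open>gram_vec_gram_preimage\<close>.
  \<close>

definition gram_preimage :: "(vtx \<Rightarrow> int) \<Rightarrow> int \<Rightarrow> int \<Rightarrow> int \<Rightarrow> int \<Rightarrow> int \<Rightarrow> vtx \<Rightarrow> int" where
  "gram_preimage a k1 k2 k3 k4 k5 = vec_of
    [(L 2, 2 * a (L 4) + 5 * a (L 5) + 2 * a (L 6) + a (L 7) + 2 * a (L 11) - a (M 2) - 2 * a (M 6)
        - a (M 8) + a (M 9) - 4 * k1 - 2 * k2 - 2 * k3 + 3 * k4 - 6 * k5),
     (L 3, - 2 * a (L 5) - a (L 6) - a (L 11) + a (M 2) + a (M 6) - a (M 9) + 2 * k1 + k3 - k4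
        + 4 * k5),
     (L 4, - 2 * a (L 4) - 3 * a (L 5) - a (L 6) - a (L 7) - a (L 11) + a (M 2) + 2 * a (M 6)
        + a (M 8) - a (M 9) + 2 * k1 + 2 * k2 + k3 - 2 * k4 + 4 * k5),
     (L 5, 3 * a (L 4) + 13 * a (L 5) + 3 * a (L 6) + 5 * a (L 7) + 6 * a (L 11) - 3 * a (M 2)
        - a (M 3) - 8 * a (M 6) - 4 * a (M 8) + 4 * a (M 9) - 6 * k1 - 8 * k2 - 3 * k3 + 8 * k4
        - 19 * k5),
     (L 6, - a (L 4) - 3 * a (L 5) - 2 * a (L 6) - a (L 7) - a (L 11) + 2 * a (M 2) + 2 * a (M 6)
        + a (M 8) - 2 * a (M 9) + 2 * k1 + 2 * k2 - k4 + 5 * k5),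
     (L 7, a (L 4) + 4 * a (L 5) + a (L 6) + 2 * a (L 11) - a (M 2) - 2 * a (M 6) - 2 * a (M 8)
        - 2 * k1 - 2 * k2 - k3 + 3 * k4 - 5 * k5),
     (L 8, - 3 * a (L 4) - 16 * a (L 5) - 2 * a (L 6) - 6 * a (L 7) - 7 * a (L 11) + 2 * a (M 2)
        + 2 * a (M 3) + 9 * a (M 6) + 5 * a (M 8) - 3 * a (M 9) + 6 * k1 + 10 * k2 + 4 * k3
        - 10 * k4 + 21 * k5),
     (L 11, 2 * a (L 4) + 10 * a (L 5) + 2 * a (L 6) + 4 * a (L 7) + 4 * a (L 11) - 2 * a (M 2)
        - a (M 3) - 6 * a (M 6) - 3 * a (M 8) + 3 * a (M 9) - 4 * k1 - 6 * k2 - 2 * k3 + 6 * k4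
        - 14 * k5),
     (M 1, - a (L 4) - 7 * a (L 5) - a (L 6) - 3 * a (L 7) - 3 * a (L 11) + 2 * a (M 2) + a (M 3)
        + 5 * a (M 6) + 3 * a (M 8) - 2 * a (M 9) + 2 * k1 + 5 * k2 - 4 * k4 + 10 * k5),
     (M 2, 4 * a (L 4) + 16 * a (L 5) + 4 * a (L 6) + 5 * a (L 7) + 7 * a (L 11) - 4 * a (M 2)
        - a (M 3) - 9 * a (M 6) - 5 * a (M 8) + 4 * a (M 9) - 8 * k1 - 9 * k2 - 4 * k3 + 10 * k4
        - 22 * k5),
     (M 3, - 2 * a (L 4) - 7 * a (L 5) - 2 * a (L 6) - 2 * a (L 7) - 3 * a (L 11) + 2 * a (M 2)
        + 4 * a (M 6) + 2 * a (M 8) - 2 * a (M 9) + 4 * k1 + 4 * k2 + 2 * k3 - 4 * k4 + 10 * k5),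
     (M 6, 2 * a (L 4) + 9 * a (L 5) + a (L 6) + 4 * a (L 7) + 4 * a (L 11) - a (M 2) - a (M 3)
        - 6 * a (M 6) - 3 * a (M 8) + 2 * a (M 9) - 3 * k1 - 6 * k2 - 2 * k3 + 6 * k4 - 12 * k5),
     (M 8, - a (L 4) - 7 * a (L 5) - a (L 6) - 3 * a (L 7) - 3 * a (L 11) + a (M 2) + a (M 3)
        + 4 * a (M 6) + a (M 8) - 2 * a (M 9) + 3 * k1 + 4 * k2 + 2 * k3 - 4 * k4 + 10 * k5),
     (M 9, - a (L 4) - a (L 5) - a (L 6) - a (L 7) + a (M 2) + a (M 6) - 2 * a (M 9) + k1 + k2
        + 2 * k5),
     (M 12, 2 * a (L 5) + a (L 6) + a (L 7) + a (L 11) - a (M 2) - a (M 6) + 2 * a (M 9) - k1 - k2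
        - 4 * k5)]"

lemma gram_vec_gram_preimage:
  assumes k1: "a (L 2) + a (L 4) + a (L 5) + a (L 6) = 2 * k1"
    and k2: "a (L 3) + a (L 4) + a (L 5) + a (L 7) = 2 * k2"
    and k3: "a (M 1) + a (M 2) + a (M 6) + a (M 8) = 2 * k3"
    and k4: "a (M 6) + a (M 8) + a (M 9) + a (M 12) = 2 * k4"
    and k5: "vdot mu16 a = 16 * k5"
    and w: "w \<in> Bgens"
  shows "gram_vec (gram_preimage a k1 k2 k3 k4 k5) w = a w"
proof -
  have pivots:
    "a (L 2) = - a (L 4) - a (L 5) - a (L 6) + 2 * k1"
    "a (L 3) = - a (L 4) - a (L 5) - a (L 7) + 2 * k2"
    "a (M 1) = - a (M 2) - a (M 6) - a (M 8) + 2 * k3"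
    "a (M 12) = - a (M 6) - a (M 8) - a (M 9) + 2 * k4"
    using k1 k2 k3 k4 by simp_all
  moreover have
    "a (L 8) = 2 * a (L 4) + 13 * a (L 5) + a (L 6) + 5 * a (L 7) + 6 * a (L 11) - 2 * a (M 3)
        - 6 * a (M 6)
      - 4 * a (M 8) + 2 * a (M 9) - 4 * k1 - 8 * k2 - 4 * k3 + 8 * k4 - 16 * k5"
    using k5 pivots by (simp add: vdot_mu16)
  ultimately show ?thesis
    using w by (auto simp: Bgens_def gram_vec_rows gram_preimage_def vec_of_def algebra_simps)
qed

lemma gram_preimage_in_ZGamma: "gram_preimage a k1 k2 k3 k4 k5 \<in> ZGamma"
  by (auto simp: ZGamma_def Vs_explicit gram_preimage_def vec_of_def)

lemma disc_class_eq_0_imp_gram_vec: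
  assumes a: "rad_orth a" and a0: "disc_class a = (0, 0, 0, 0, 0)"
  obtains x where "x \<in> ZGamma" and "\<And>v. v \<in> Vs \<Longrightarrow> gram_vec x v = a v"
proof -
  have "2 dvd a (L 2) + a (L 4) + a (L 5) + a (L 6)" "2 dvd a (L 3) + a (L 4) + a (L 5) + a (L 7)"
    "2 dvd a (M 1) + a (M 2) + a (M 6) + a (M 8)" "2 dvd a (M 6) + a (M 8) + a (M 9) + a (M 12)"
    "16 dvd vdot mu16 a"
    using a0 by (simp_all add: disc_class_eq dvd_eq_mod_eq_0)
  then obtain k1 k2 k3 k4 k5 where
    "a (L 2) + a (L 4) + a (L 5) + a (L 6) = 2 * k1"
    "a (L 3) + a (L 4) + a (L 5) + a (L 7) = 2 * k2"
    "a (M 1) + a (M 2) + a (M 6) + a (M 8) = 2 * k3"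
    "a (M 6) + a (M 8) + a (M 9) + a (M 12) = 2 * k4"
    "vdot mu16 a = 16 * k5"
    by (elim dvdE)
  then have "gram_vec (gram_preimage a k1 k2 k3 k4 k5) w = a w" if "w \<in> Bgens" for w
    using that by (rule gram_vec_gram_preimage)
  then have "gram_vec (gram_preimage a k1 k2 k3 k4 k5) v = a v" if "v \<in> Vs" for v
    using rad_orth_eqI[OF rad_orth_gram_vec a _ that] by blast
  then show ?thesis
    using gram_preimage_in_ZGamma that by blast
qed

lemma group_dual_group: "group dual_group"
proof (rule groupI)
  fix f g
  assume "f \<in> carrier dual_group" "g \<in> carrier dual_group"
  then show "f \<otimes>\<^bsub>dual_group\<^esub> g \<in> carrier dual_group"
    by (simp add: dual_group_def Sdual_def algebra_simps)
next
  show "\<one>\<^bsub>dual_group\<^esub> \<in> carrier dual_group"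
    by (simp add: dual_group_def Sdual_def)
next
  fix f g h
  show "f \<otimes>\<^bsub>dual_group\<^esub> g \<otimes>\<^bsub>dual_group\<^esub> h = f \<otimes>\<^bsub>dual_group\<^esub> (g \<otimes>\<^bsub>dual_group\<^esub> h)"
    by (simp add: dual_group_def add.assoc)
next
  fix f
  show "\<one>\<^bsub>dual_group\<^esub> \<otimes>\<^bsub>dual_group\<^esub> f = f"
    by (simp add: dual_group_def)
next
  fix f
  assume "f \<in> carrier dual_group"
  then have "(\<lambda>z. - f z) \<in> carrier dual_group"
    by (simp add: dual_group_def Sdual_def algebra_simps)
  moreover have "(\<lambda>z. - f z) \<otimes>\<^bsub>dual_group\<^esub> f = \<one>\<^bsub>dual_group\<^esub>"
    by (simp add: dual_group_def)
  ultimately show "\<exists>g\<in>carrier dual_group. g \<otimes>\<^bsub>dual_group\<^esub> f = \<one>\<^bsub>dual_group\<^esub>"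
    by blast
qed

definition disc_hom :: "((vtx \<Rightarrow> int) \<Rightarrow> int) \<Rightarrow> int \<times> int \<times> int \<times> int \<times> int" where
  "disc_hom f = disc_class (\<lambda>v. f (e v))"

lemma disc_class_add: "disc_class (\<lambda>v. a v + b v) = disc_class a \<otimes>\<^bsub>disc_target\<^esub> disc_class b"
  by (simp add: disc_class_def vdot_def distrib_left sum.distrib mod_add_eq)

lemma disc_class_in_carrier: "disc_class a \<in> carrier disc_target"
  by (simp add: disc_class_def carrier_integer_mod_group)

lemma disc_hom_hom: "disc_hom \<in> hom dual_group disc_target"
proof (rule homI)
  show "disc_hom f \<in> carrier disc_target" for f
    unfolding disc_hom_def by (rule disc_class_in_carrier)
  show "disc_hom (f \<otimes>\<^bsub>dual_group\<^esub> g) = disc_hom f \<otimes>\<^bsub>disc_target\<^esub> disc_hom g" for f g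
    unfolding disc_hom_def dual_group_def by (simp add: disc_class_add)
qed

lemma disc_hom_dual_elem: "disc_hom (dual_elem a) = disc_class a"
  unfolding disc_hom_def using Bgens_subset_Vs by (auto intro!: disc_class_cong simp: dual_elem_e)

lemma disc_hom_onto: "disc_hom ` carrier dual_group = carrier disc_target"
proof
  show "disc_hom ` carrier dual_group \<subseteq> carrier disc_target"
    unfolding disc_hom_def by (intro image_subsetI disc_class_in_carrier)
next
  show "carrier disc_target \<subseteq> disc_hom ` carrier dual_group"
  proof
    fix t
    assume t: "t \<in> carrier disc_target"
    have "dual_elem (disc_lift t) \<in> carrier dual_group"
      using dual_elem_in_Sdual rad_orth_extend by (simp add: dual_group_def disc_lift_def split: prod.split)
    moreover have "disc_hom (dual_elem (disc_lift t)) = t"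
      using t by (simp add: disc_hom_dual_elem disc_class_disc_lift)
    ultimately show "t \<in> disc_hom ` carrier dual_group"
      by (metis image_eqI)
  qed
qed

lemma kernel_disc_hom: "kernel dual_group disc_target disc_hom = S_in_dual"
proof
  show "S_in_dual \<subseteq> kernel dual_group disc_target disc_hom"
    by (auto simp: S_in_dual_eq kernel_def dual_group_def disc_hom_dual_elem disc_class_gram_vec
        intro: dual_elem_in_Sdual rad_orth_gram_vec)
next
  show "kernel dual_group disc_target disc_hom \<subseteq> S_in_dual"
  proof
    fix f
    assume "f \<in> kernel dual_group disc_target disc_hom"
    then have f: "f \<in> Sdual" and f0: "disc_class (\<lambda>v. f (e v)) = (0, 0, 0, 0, 0)"
      by (auto simp: kernel_def dual_group_def disc_hom_def)
    obtain x where x: "x \<in> ZGamma" and "\<And>v. v \<in> Vs \<Longrightarrow> gram_vec x v = f (e v)"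
      using disc_class_eq_0_imp_gram_vec[OF rad_orth_Sdual[OF f] f0] by blast
    then have "f = dual_elem (gram_vec x)"
      using Sdual_eq_dual_elem[OF f] dual_elem_cong by metis
    then show "f \<in> S_in_dual"
      using x by (simp add: S_in_dual_eq)
  qed
qed

theorem proposition4p1:
  shows "card Bgens = 15 \<and> freely_generates_S Bgens \<and>
         dual_group Mod S_in_dual \<cong>
           (integer_mod_group 2 \<times>\<times> integer_mod_group 2 \<times>\<times> integer_mod_group 2 \<times>\<times>
            integer_mod_group 2 \<times>\<times> integer_mod_group 16)"
proof (intro conjI)
  show "card Bgens = 15"
    by (rule card_Bgens)
  show "freely_generates_S Bgens"
    by (rule freely_generates_S_Bgens)
  have "group_hom dual_group disc_target disc_hom"
    by (simp add: group_hom_def group_hom_axioms_def group_dual_group DirProd_group disc_hom_hom)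
  then show "dual_group Mod S_in_dual \<cong> disc_target"
    using group_hom.FactGroup_iso[OF _ disc_hom_onto] by (simp add: kernel_disc_hom)
qed

end
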